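(* Consider a market with $n$ buyers, $m$ items and $T$ time periods. Item $j$ has per-period supply $s_j^t\ge0$ and overall supply $s_j\ge0$. Buyer $i$ has budget $B_i\ge0$, valuations $v_{ij}\ge0$ and per-period demands $d_i^t\ge0$. For an allocation $x=(x_{ij}^t)\ge0$ let $u_i^t=\sum_j v_{ij}x_{ij}^t-d_i^t$. Let $x$ be an optimal solution of $$\max_{x\ge0}\sum_i B_i\cdot\frac1T\sum_t\log\Big(\sum_j v_{ij}x_{ij}^t-d_i^t\Big)\ \ \text{s.t.}\ \ \sum_i x_{ij}^t\le s_j^t\ \forall j,t;\qquad\sum_{t,i}x_{ij}^t\le s_j\ \forall j,$$ (where the program is assumed to have a feasible point with all $u_i^t>0$), with optimal dual variables $\lambda_j^t\ge0$ and $\lambda_j\ge0$ of the per-period and overall supply constraints satisfying the KKT conditions, and set $p_j^t=\lambda_j^t+\lambda_j$. Then for every buyer $i$, $$\sum_{t,j}x_{ij}^t p_j^t=B_i\Big[\frac1T\sum_t\Big(1+\frac{d_i^t}{u_i^t}\Big)\Big].$$ *)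

theory Defs
  imports Complex_Main
begin

text \<open>Indices: buyers i < n, items j < m, periods t < T (all as nat).
  Allocation x i j t = x_{ij}^t; per-period supply st j t = s_j^t;
  overall supply s j; budget B i; valuation v i j; demand d i t = d_i^t.\<close>

definition util :: "nat \<Rightarrow> (nat \<Rightarrow> nat \<Rightarrow> real) \<Rightarrow> (nat \<Rightarrow> nat \<Rightarrow> real)
    \<Rightarrow> (nat \<Rightarrow> nat \<Rightarrow> nat \<Rightarrow> real) \<Rightarrow> nat \<Rightarrow> nat \<Rightarrow> real" where
  "util m v d x i t = (\<Sum>j<m. v i j * x i j t) - d i t"

text \<open>Feasible points of the program (inside the domain of the log objective,
  i.e. all utilities strictly positive).\<close>
definition feasible where
  "feasible n m T st s v d x \<longleftrightarrow>
     (\<forall>i<n. \<forall>j<m. \<forall>t<T. x i j t \<ge> 0) \<and>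
     (\<forall>j<m. \<forall>t<T. (\<Sum>i<n. x i j t) \<le> st j t) \<and>
     (\<forall>j<m. (\<Sum>t<T. \<Sum>i<n. x i j t) \<le> s j) \<and>
     (\<forall>i<n. \<forall>t<T. util m v d x i t > 0)"

definition objective where
  "objective n m T B v d x = (\<Sum>i<n. B i * ((1 / real T) * (\<Sum>t<T. ln (util m v d x i t))))"

definition optimal where
  "optimal n m T st s B v d x \<longleftrightarrow> feasible n m T st s v d x \<and>
     (\<forall>y. feasible n m T st s v d y \<longrightarrow> objective n m T B v d y \<le> objective n m T B v d x)"

text \<open>KKT conditions for the (concave maximisation) program with multipliers
  lam j t for the per-period supply constraints, lamall j for the overall supply
  constraints, and mu i j t for the nonnegativity constraints x \<ge> 0.\<close>
definition KKT where
  "KKT n m T st s B v d x lam lamall \<longleftrightarrow>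
     feasible n m T st s v d x \<and>
     (\<forall>j<m. \<forall>t<T. lam j t \<ge> 0) \<and> (\<forall>j<m. lamall j \<ge> 0) \<and>
     (\<exists>mu. (\<forall>i<n. \<forall>j<m. \<forall>t<T. mu i j t \<ge> 0 \<and> mu i j t * x i j t = 0 \<and>
              B i * (1 / real T) * v i j / util m v d x i t - lam j t - lamall j + mu i j t = 0)) \<and>
     (\<forall>j<m. \<forall>t<T. lam j t * (st j t - (\<Sum>i<n. x i j t)) = 0) \<and>
     (\<forall>j<m. lamall j * (s j - (\<Sum>t<T. \<Sum>i<n. x i j t)) = 0)"

end

theory Submission
  imports Defs
begin

text \<open>Stationarity of the KKT conditions says that the price
  \<open>p\<^sub>j\<^sup>t = \<lambda>\<^sub>j\<^sup>t + \<lambda>\<^sub>j\<close> equals \<open>B\<^sub>i v\<^sub>i\<^sub>j / (T u\<^sub>i\<^sup>t)\<close> up to a multiplier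
  \<open>\<mu>\<^sub>i\<^sub>j\<^sup>t\<close> of the constraint \<open>x\<^sub>i\<^sub>j\<^sup>t \<ge> 0\<close>, and complementary slackness kills
  that multiplier wherever \<open>x\<^sub>i\<^sub>j\<^sup>t \<noteq> 0\<close>. Hence buyer \<open>i\<close> spends
  \<open>B\<^sub>i/(T u\<^sub>i\<^sup>t) \<Sum>\<^sub>j v\<^sub>i\<^sub>j x\<^sub>i\<^sub>j\<^sup>t = B\<^sub>i/(T u\<^sub>i\<^sup>t) (u\<^sub>i\<^sup>t + d\<^sub>i\<^sup>t)\<close> in period \<open>t\<close>;
  summing over the periods gives the claim.\<close>

lemma sum_spending_complementary_slackness:
  fixes x p v \<mu> :: "'a \<Rightarrow> real"
  assumes "\<And>j. j \<in> A \<Longrightarrow> p j = c * v j + \<mu> j"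
    and "\<And>j. j \<in> A \<Longrightarrow> \<mu> j * x j = 0"
  shows "(\<Sum>j\<in>A. x j * p j) = c * (\<Sum>j\<in>A. v j * x j)"
proof -
  have "(\<Sum>j\<in>A. x j * p j) = (\<Sum>j\<in>A. c * (v j * x j))"
  proof (rule sum.cong[OF refl])
    fix j assume "j \<in> A"
    then have "x j * p j = c * (v j * x j) + \<mu> j * x j"
      using assms(1) by (simp add: algebra_simps)
    also have "\<dots> = c * (v j * x j)"
      using assms(2) \<open>j \<in> A\<close> by simp
    finally show "x j * p j = c * (v j * x j)" .
  qed
  then show ?thesis by (simp add: sum_distrib_left)
qed

lemma KKT_stationarity:
  assumes "KKT n m T st s B v d x lam lamall" and "i < n" and "t < T"
  obtains \<mu> :: "nat \<Rightarrow> real" where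
    "\<And>j. j < m \<Longrightarrow> \<mu> j * x i j t = 0"
    "\<And>j. j < m \<Longrightarrow> lam j t + lamall j = B i / real T / util m v d x i t * v i j + \<mu> j"
proof -
  from assms(1) obtain \<mu> where \<mu>: "\<forall>i<n. \<forall>j<m. \<forall>t<T. \<mu> i j t \<ge> 0 \<and> \<mu> i j t * x i j t = 0 \<and>
      B i * (1 / real T) * v i j / util m v d x i t - lam j t - lamall j + \<mu> i j t = 0"
    unfolding KKT_def by blast
  show thesis
  proof (rule that[of "\<lambda>j. \<mu> i j t"])
    fix j assume "j < m"
    with \<mu> assms(2,3) show "\<mu> i j t * x i j t = 0"
      and "lam j t + lamall j = B i / real T / util m v d x i t * v i j + \<mu> i j t"
      by (auto simp: field_simps)
  qed
qed

lemma KKT_period_spending: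
  assumes "KKT n m T st s B v d x lam lamall" and "i < n" and "t < T"
  shows "(\<Sum>j<m. x i j t * (lam j t + lamall j))
         = B i / real T * (1 + d i t / util m v d x i t)"
proof -
  let ?u = "util m v d x i t"
  have "feasible n m T st s v d x"
    using assms(1) unfolding KKT_def by simp
  with assms(2,3) have "?u > 0"
    unfolding feasible_def by simp
  obtain \<mu> where "\<And>j. j < m \<Longrightarrow> \<mu> j * x i j t = 0"
    and "\<And>j. j < m \<Longrightarrow> lam j t + lamall j = B i / real T / ?u * v i j + \<mu> j"
    using KKT_stationarity[OF assms] by blast
  then have "(\<Sum>j<m. x i j t * (lam j t + lamall j)) = B i / real T / ?u * (\<Sum>j<m. v i j * x i j t)"
    by (intro sum_spending_complementary_slackness) simp_all
  also have "(\<Sum>j<m. v i j * x i j t) = ?u + d i t"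
    unfolding util_def by simp
  also have "B i / real T / ?u * (?u + d i t) = B i / real T * (1 + d i t / ?u)"
    using \<open>?u > 0\<close> by (simp add: field_simps)
  finally show ?thesis .
qed

theorem lemma3:
  fixes n m T :: nat
    and st :: "nat \<Rightarrow> nat \<Rightarrow> real" and s :: "nat \<Rightarrow> real"
    and B :: "nat \<Rightarrow> real" and v :: "nat \<Rightarrow> nat \<Rightarrow> real" and d :: "nat \<Rightarrow> nat \<Rightarrow> real"
    and x :: "nat \<Rightarrow> nat \<Rightarrow> nat \<Rightarrow> real"
    and lam :: "nat \<Rightarrow> nat \<Rightarrow> real" and lamall :: "nat \<Rightarrow> real"
  assumes "T > 0"
    and "\<forall>j<m. \<forall>t<T. st j t \<ge> 0" and "\<forall>j<m. s j \<ge> 0"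
    and "\<forall>i<n. B i \<ge> 0" and "\<forall>i<n. \<forall>j<m. v i j \<ge> 0" and "\<forall>i<n. \<forall>t<T. d i t \<ge> 0"
    and "\<exists>y. feasible n m T st s v d y"
    and "optimal n m T st s B v d x"
    and "KKT n m T st s B v d x lam lamall"
    and "i < n"
  shows "(\<Sum>t<T. \<Sum>j<m. x i j t * (lam j t + lamall j))
         = B i * ((1 / real T) * (\<Sum>t<T. 1 + d i t / util m v d x i t))"
proof -
  have "(\<Sum>t<T. \<Sum>j<m. x i j t * (lam j t + lamall j))
        = (\<Sum>t<T. B i / real T * (1 + d i t / util m v d x i t))"
    using KKT_period_spending[OF assms(9,10)] by simp
  also have "\<dots> = B i * ((1 / real T) * (\<Sum>t<T. 1 + d i t / util m v d x i t))"
    by (simp add: sum_distrib_left)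
  finally show ?thesis .
qed

end
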